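(* Let $G$ be a $K_4$-minor-free graph, $xx'$ an edge of $G$, and $y,z$ distinct vertices of $G$ not in $\{x,x'\}$. Then at least one of the sets $\{x,y,z\}$ and $\{x',y,z\}$ is feasible.
   Context: $K_4$-minor-free graphs are $3$-colorable. For $n\in\mathbb{N}$, the chain of diamonds $D_n$ is the graph with vertex set $\{u_i,v_i,w_i:i\in[n]\}\cup\{u_0\}$ and edge set $\{u_{i-1}v_i,u_{i-1}w_i,v_iw_i,v_iu_i,w_iu_i: i\in[n]\}$; let $U(D_n)=\{u_0,\dots,u_n\}$. A set $X$ of distinct vertices of $G$ is connected by a chain of diamonds if there exist $n\in\mathbb{N}$ and a graph homomorphism $\varphi:D_n\to G$ with $X\subseteq\varphi(U(D_n))$. A set $X$ of three distinct vertices of $G$ is feasible if $X$ is not connected by a chain of diamonds and there is a proper $3$-coloring $\phi$ of $G$ with $|\phi(X)|\le 2$. *)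

theory Defs
  imports Main
begin

definition simple_graph :: "'a set \<Rightarrow> ('a \<Rightarrow> 'a \<Rightarrow> bool) \<Rightarrow> bool" where
  "simple_graph V E \<longleftrightarrow> finite V \<and> (\<forall>u v. E u v \<longrightarrow> u \<in> V \<and> v \<in> V)
     \<and> (\<forall>u v. E u v \<longrightarrow> E v u) \<and> (\<forall>u. \<not> E u u)"

definition connected_set :: "'a set \<Rightarrow> ('a \<Rightarrow> 'a \<Rightarrow> bool) \<Rightarrow> 'a set \<Rightarrow> bool" where
  "connected_set V E B \<longleftrightarrow> B \<noteq> {} \<and> B \<subseteq> V \<and>
     (\<forall>a\<in>B. \<forall>b\<in>B. (\<lambda>u v. u \<in> B \<and> v \<in> B \<and> E u v)\<^sup>*\<^sup>* a b)"

definition has_K4_minor :: "'a set \<Rightarrow> ('a \<Rightarrow> 'a \<Rightarrow> bool) \<Rightarrow> bool" where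
  "has_K4_minor V E \<longleftrightarrow> (\<exists>B :: nat \<Rightarrow> 'a set.
     (\<forall>i<4. connected_set V E (B i)) \<and>
     (\<forall>i<4. \<forall>j<4. i \<noteq> j \<longrightarrow> B i \<inter> B j = {}) \<and>
     (\<forall>i<4. \<forall>j<4. i \<noteq> j \<longrightarrow> (\<exists>a\<in>B i. \<exists>b\<in>B j. E a b)))"

definition K4_minor_free :: "'a set \<Rightarrow> ('a \<Rightarrow> 'a \<Rightarrow> bool) \<Rightarrow> bool" where
  "K4_minor_free V E \<longleftrightarrow> \<not> has_K4_minor V E"

text \<open>A graph homomorphism from the chain of diamonds D_n into G, given by the images
u i (i = 0..n), v i, w i (i = 1..n).\<close>
definition diamond_chain_hom ::
  "'a set \<Rightarrow> ('a \<Rightarrow> 'a \<Rightarrow> bool) \<Rightarrow> nat \<Rightarrow> (nat \<Rightarrow> 'a) \<Rightarrow> (nat \<Rightarrow> 'a) \<Rightarrow> (nat \<Rightarrow> 'a) \<Rightarrow> bool" where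
  "diamond_chain_hom V E n u v w \<longleftrightarrow>
     (\<forall>i\<in>{0..n}. u i \<in> V) \<and> (\<forall>i\<in>{1..n}. v i \<in> V \<and> w i \<in> V) \<and>
     (\<forall>i\<in>{1..n}. E (u (i - 1)) (v i) \<and> E (u (i - 1)) (w i) \<and> E (v i) (w i)
                  \<and> E (v i) (u i) \<and> E (w i) (u i))"

definition connected_by_diamonds :: "'a set \<Rightarrow> ('a \<Rightarrow> 'a \<Rightarrow> bool) \<Rightarrow> 'a set \<Rightarrow> bool" where
  "connected_by_diamonds V E X \<longleftrightarrow>
     (\<exists>n u v w. diamond_chain_hom V E n u v w \<and> X \<subseteq> u ` {0..n})"

definition proper_3_coloring :: "'a set \<Rightarrow> ('a \<Rightarrow> 'a \<Rightarrow> bool) \<Rightarrow> ('a \<Rightarrow> nat) \<Rightarrow> bool" where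
  "proper_3_coloring V E c \<longleftrightarrow> (\<forall>x\<in>V. c x < 3) \<and> (\<forall>x y. E x y \<longrightarrow> c x \<noteq> c y)"

definition feasible :: "'a set \<Rightarrow> ('a \<Rightarrow> 'a \<Rightarrow> bool) \<Rightarrow> 'a set \<Rightarrow> bool" where
  "feasible V E X \<longleftrightarrow> X \<subseteq> V \<and> card X = 3 \<and> \<not> connected_by_diamonds V E X \<and>
     (\<exists>c. proper_3_coloring V E c \<and> card (c ` X) \<le> 2)"

end

theory Submission
  imports Defs
begin

text \<open>
  By Dirac's argument a graph of minimum degree at least 3 has a \<open>K\<^sub>4\<close> minor: a smallest
  counterexample admits a reduction that keeps minimum degree 3, namely deleting an edge between
  two vertices of degree at least 4, contracting an edge, or deleting one vertex of a diamond
  and contracting another. So a \<open>K\<^sub>4\<close>-minor-free graph has a vertex of degree at most 2 and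
  is 3-colourable by induction.

  In a proper 3-colouring the two tips of a diamond both receive the colour missing from its
  middle edge, so the image of \<open>U(D\<^sub>n)\<close> under a homomorphism is monochromatic. Fix a
  3-colouring \<open>c\<close>; then \<open>c x \<noteq> c x'\<close>. If \<open>c y = c z\<close>, both triples use at most two colours,
  and they cannot both be connected by diamonds, as that would force \<open>c x = c y = c x'\<close>. If
  \<open>c y \<noteq> c z\<close>, neither triple is connected by diamonds, and since there are only three colours
  one of \<open>c x\<close>, \<open>c x'\<close> lies in \<open>{c y, c z}\<close>.
\<close>

abbreviation degree :: "('a \<Rightarrow> 'a \<Rightarrow> bool) \<Rightarrow> 'a \<Rightarrow> nat" where
  "degree E v \<equiv> card {w. E v w}"

abbreviation edges :: "('a \<Rightarrow> 'a \<Rightarrow> bool) \<Rightarrow> ('a \<times> 'a) set" where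
  "edges E \<equiv> {(a, b). E a b}"

lemma simple_graphD:
  assumes "simple_graph V E"
  shows "finite V" "E a b \<Longrightarrow> a \<in> V" "E a b \<Longrightarrow> b \<in> V" "E a b \<Longrightarrow> E b a" "\<not> E a a"
  using assms unfolding simple_graph_def by blast+

lemma finite_neighbours: "simple_graph V E \<Longrightarrow> finite {w. E v w}"
  by (rule finite_subset[of _ V]) (auto dest: simple_graphD)

lemma finite_edges: "simple_graph V E \<Longrightarrow> finite (edges E)"
  by (rule finite_subset[of _ "V \<times> V"]) (auto dest: simple_graphD)

lemma three_le_card:
  assumes "finite S" "{p, q, r} \<subseteq> S" "p \<noteq> q" "p \<noteq> r" "q \<noteq> r"
  shows "3 \<le> card S"
  using card_mono[OF assms(1,2)] assms(3-5) by simp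

subsection \<open>Deletion and contraction\<close>

text \<open>Contraction of the edge \<open>uv\<close> onto \<open>u\<close>; the vertex set becomes \<open>V - {v}\<close>.\<close>

definition contract :: "('a \<Rightarrow> 'a \<Rightarrow> bool) \<Rightarrow> 'a \<Rightarrow> 'a \<Rightarrow> 'a \<Rightarrow> 'a \<Rightarrow> bool" where
  "contract E u v a b \<longleftrightarrow>
     a \<noteq> b \<and> a \<noteq> v \<and> b \<noteq> v \<and> (E a b \<or> (a = u \<and> E v b) \<or> (b = u \<and> E a v))"

definition delete_vertex :: "('a \<Rightarrow> 'a \<Rightarrow> bool) \<Rightarrow> 'a \<Rightarrow> 'a \<Rightarrow> 'a \<Rightarrow> bool" where
  "delete_vertex E v a b \<longleftrightarrow> E a b \<and> a \<noteq> v \<and> b \<noteq> v"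

definition delete_edge :: "('a \<Rightarrow> 'a \<Rightarrow> bool) \<Rightarrow> 'a \<Rightarrow> 'a \<Rightarrow> 'a \<Rightarrow> 'a \<Rightarrow> bool" where
  "delete_edge E p q a b \<longleftrightarrow> E a b \<and> {a, b} \<noteq> {p, q}"

lemma simple_graph_delete_vertex:
  "simple_graph V E \<Longrightarrow> simple_graph (V - {v}) (delete_vertex E v)"
  unfolding simple_graph_def delete_vertex_def by auto

lemma simple_graph_delete_edge:
  "simple_graph V E \<Longrightarrow> simple_graph V (delete_edge E p q)"
  unfolding simple_graph_def delete_edge_def by (auto simp: insert_commute)

lemma simple_graph_contract:
  "simple_graph V E \<Longrightarrow> E u v \<Longrightarrow> simple_graph (V - {v}) (contract E u v)"
  unfolding simple_graph_def contract_def by blast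

lemma neighbours_delete_vertex:
  "w \<noteq> v \<Longrightarrow> {x. delete_vertex E v w x} = {x. E w x} - {v}"
  unfolding delete_vertex_def by auto

lemma neighbours_contract_merged:
  assumes "simple_graph V E" "E u v"
  shows "{x. contract E u v u x} = {x. E u x} \<union> {x. E v x} - {u, v}"
  using assms(2) simple_graphD(5)[OF assms(1)] unfolding contract_def by auto

lemma degree_contract_other:
  assumes G: "simple_graph V E" and uv: "E u v" and w: "w \<noteq> u" "w \<noteq> v"
  shows "degree (contract E u v) w = (if E w u \<and> E w v then degree E w - 1 else degree E w)"
proof -
  have fin: "finite {x. E w x}"
    using finite_neighbours[OF G] .
  have "u \<noteq> v"
    using uv simple_graphD(5)[OF G] by blast
  then have N: "{x. contract E u v w x} = {x. E w x} - {v} \<union> (if E w v then {u} else {})"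
    using w simple_graphD(5)[OF G] unfolding contract_def by auto
  show ?thesis
  proof (cases "E w v")
    case True
    then have "0 < degree E w"
      using fin card_gt_0_iff by blast
    with N True fin \<open>u \<noteq> v\<close> show ?thesis
      by (simp add: card_insert_if card_Diff_singleton_if)
  qed (use N fin in \<open>simp add: card_Diff_singleton_if\<close>)
qed

lemma min_degree_contract:
  assumes G: "simple_graph V E" and uv: "E u v"
    and degree_other: "\<And>w. w \<in> V \<Longrightarrow> w \<noteq> u \<Longrightarrow> w \<noteq> v \<Longrightarrow> k \<le> degree E w"
    and common: "\<And>w. E u w \<Longrightarrow> E v w \<Longrightarrow> k < degree E w"
    and merged: "k \<le> card ({x. E u x} \<union> {x. E v x} - {u, v})"
    and w: "w \<in> V - {v}"
  shows "k \<le> degree (contract E u v) w"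
proof (cases "w = u")
  case True
  then show ?thesis
    using merged neighbours_contract_merged[OF G uv] by simp
next
  case False
  with w have "k \<le> degree E w" "E w u \<and> E w v \<Longrightarrow> k < degree E w"
    using degree_other common simple_graphD(4)[OF G] by blast+
  then show ?thesis
    using degree_contract_other[OF G uv False] w by auto
qed

lemma min_degree_delete_edge:
  assumes G: "simple_graph V E" and min_degree: "\<And>w. w \<in> V \<Longrightarrow> k \<le> degree E w"
    and heavy: "k < degree E p" "k < degree E q" and w: "w \<in> V"
  shows "k \<le> degree (delete_edge E p q) w"
proof (cases "w = p \<or> w = q")
  case True
  define y where "y = (if w = p then q else p)"
  have "{x. E w x} - {y} \<subseteq> {x. delete_edge E p q w x}"
    using True simple_graphD(5)[OF G] by (auto simp: y_def delete_edge_def doubleton_eq_iff)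
  then have "card ({x. E w x} - {y}) \<le> degree (delete_edge E p q) w"
    by (rule card_mono[OF finite_neighbours[OF simple_graph_delete_edge[OF G]]])
  moreover have "degree E w - 1 \<le> card ({x. E w x} - {y})"
    by (simp add: card_Diff_singleton_if)
  moreover have "k < degree E w"
    using True heavy by blast
  ultimately show ?thesis
    by linarith
next
  case False
  then have "{x. delete_edge E p q w x} = {x. E w x}"
    by (auto simp: delete_edge_def doubleton_eq_iff)
  then show ?thesis
    using min_degree w by simp
qed

lemma card_edges_delete_vertex_le:
  "finite (edges E) \<Longrightarrow> card (edges (delete_vertex E v)) \<le> card (edges E)"
  by (rule card_mono) (auto simp: delete_vertex_def)

lemma card_edges_delete_edge_less:
  "finite (edges E) \<Longrightarrow> E p q \<Longrightarrow> card (edges (delete_edge E p q)) < card (edges E)"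
  by (rule psubset_card_mono) (auto simp: delete_edge_def)

lemma card_edges_contract_le:
  assumes "finite (edges E)"
  shows "card (edges (contract E u v)) \<le> card (edges E)"
proof -
  define r where "r x = (if x = v then u else x)" for x
  have "edges (contract E u v) \<subseteq> map_prod r r ` edges E"
  proof
    fix e assume "e \<in> edges (contract E u v)"
    then obtain a b where e: "e = (a, b)" and ab: "contract E u v a b"
      by blast
    then have "(a, b) = map_prod r r (a, b)" "(a, b) = map_prod r r (v, b) \<or> a \<noteq> u"
      "(a, b) = map_prod r r (a, v) \<or> b \<noteq> u"
      unfolding r_def contract_def by auto
    with e ab show "e \<in> map_prod r r ` edges E"
      unfolding contract_def by blast
  qed
  then show ?thesis
    using assms by (meson card_image_le card_mono finite_imageI le_trans)
qed

subsection \<open>Minors\<close>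

lemma connected_set_mono:
  assumes "connected_set V' E' B" "V' \<subseteq> V" "\<And>a b. E' a b \<Longrightarrow> E a b"
  shows "connected_set V E B"
proof -
  have "(\<lambda>a b. a \<in> B \<and> b \<in> B \<and> E' a b)\<^sup>*\<^sup>* \<le> (\<lambda>a b. a \<in> B \<and> b \<in> B \<and> E a b)\<^sup>*\<^sup>*"
    by (rule rtranclp_mono) (auto simp: assms(3))
  with assms(1,2) show ?thesis
    unfolding connected_set_def by blast
qed

lemma has_K4_minor_mono:
  assumes "has_K4_minor V' E'" "V' \<subseteq> V" "\<And>a b. E' a b \<Longrightarrow> E a b"
  shows "has_K4_minor V E"
proof -
  obtain B :: "nat \<Rightarrow> _" where
        conn: "\<forall>i<4. connected_set V' E' (B i)"
    and disj: "\<forall>i<4. \<forall>j<4. i \<noteq> j \<longrightarrow> B i \<inter> B j = {}"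
    and adj: "\<forall>i<4. \<forall>j<4. i \<noteq> j \<longrightarrow> (\<exists>a\<in>B i. \<exists>b\<in>B j. E' a b)"
    using assms(1) unfolding has_K4_minor_def by blast
  have "\<forall>i<4. connected_set V E (B i)"
    using conn connected_set_mono[of V' E' _ V E] assms(2,3) by blast
  moreover have "\<forall>i<4. \<forall>j<4. i \<noteq> j \<longrightarrow> (\<exists>a\<in>B i. \<exists>b\<in>B j. E a b)"
    using adj assms(3) by blast
  ultimately show ?thesis
    using disj unfolding has_K4_minor_def by blast
qed

lemma has_K4_minor_delete_vertex:
  "has_K4_minor (V - {v}) (delete_vertex E v) \<Longrightarrow> has_K4_minor V E"
  by (erule has_K4_minor_mono) (auto simp: delete_vertex_def)

lemma has_K4_minor_delete_edge:
  "has_K4_minor V (delete_edge E p q) \<Longrightarrow> has_K4_minor V E"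
  by (erule has_K4_minor_mono) (auto simp: delete_edge_def)

lemma has_K4_minor_clique:
  assumes "simple_graph V E" "E a b" "E a c" "E a d" "E b c" "E b d" "E c d"
  shows "has_K4_minor V E"
proof -
  note G = simple_graphD[OF assms(1)]
  define B :: "nat \<Rightarrow> _ set" where "B i = {[a, b, c, d] ! i}" for i
  have all4: "(\<forall>i<4. P i) \<longleftrightarrow> P 0 \<and> P 1 \<and> P 2 \<and> P 3" for P :: "nat \<Rightarrow> bool"
    by (auto simp: less_Suc_eq eval_nat_numeral)
  have B: "B 0 = {a}" "B 1 = {b}" "B 2 = {c}" "B 3 = {d}"
    by (simp_all add: B_def eval_nat_numeral)
  have sym: "E b a" "E c a" "E d a" "E c b" "E d b" "E d c"
    using assms(2-7) G(4) by metis+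
  have "connected_set V E {p}" if "p \<in> V" for p
    using that unfolding connected_set_def by auto
  then have "\<forall>i<4. connected_set V E (B i)"
    unfolding all4 B using assms(2-7) G(2,3) by metis
  moreover have "\<forall>i<4. \<forall>j<4. i \<noteq> j \<longrightarrow> B i \<inter> B j = {}"
    unfolding all4 B using assms(2-7) G(5) by auto
  moreover have "\<forall>i<4. \<forall>j<4. i \<noteq> j \<longrightarrow> (\<exists>p\<in>B i. \<exists>q\<in>B j. E p q)"
    unfolding all4 B using assms(2-7) sym by simp
  ultimately show ?thesis
    unfolding has_K4_minor_def by blast
qed

lemma contract_edgeD:
  assumes "simple_graph V E" "E u v" "contract E u v a b"
  shows "E a b \<or> E a v \<and> E v b \<and> u \<in> {a, b}"
  using assms(2,3) simple_graphD(4)[OF assms(1)] unfolding contract_def by blast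

lemma connected_set_contract:
  assumes G: "simple_graph V E" and uv: "E u v"
    and B: "connected_set (V - {v}) (contract E u v) B"
  shows "connected_set V E (if u \<in> B then insert v B else B)"
proof -
  define B' where "B' = (if u \<in> B then insert v B else B)"
  define R where "R a b \<longleftrightarrow> a \<in> B' \<and> b \<in> B' \<and> E a b" for a b
  have B': "B \<subseteq> B'" "B' \<subseteq> insert v B" "v \<in> B' \<longleftrightarrow> u \<in> B"
    using B unfolding B'_def connected_set_def by auto
  have via_v: "R\<^sup>*\<^sup>* a b" if "R a v" "R v b" for a b
    using that by (meson converse_rtranclp_into_rtranclp r_into_rtranclp)
  have "R\<^sup>*\<^sup>* a b" if "a \<in> B" "b \<in> B" "contract E u v a b" for a b
    using contract_edgeD[OF G uv that(3)]
  proof (elim disjE conjE)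
    assume "E a b"
    then show ?thesis
      using that B' by (intro r_into_rtranclp) (auto simp: R_def)
  next
    assume "E a v" "E v b" "u \<in> {a, b}"
    then show ?thesis
      using that B' by (intro via_v) (auto simp: R_def)
  qed
  then have "(\<lambda>a b. a \<in> B \<and> b \<in> B \<and> contract E u v a b)\<^sup>*\<^sup>* \<le> (R\<^sup>*\<^sup>*)\<^sup>*\<^sup>*"
    by (intro rtranclp_mono) blast
  then have within_B: "R\<^sup>*\<^sup>* a b" if "a \<in> B" "b \<in> B" for a b
    using B that unfolding connected_set_def rtranclp_idemp by blast
  have "R\<^sup>*\<^sup>* a b" if "a \<in> B'" "b \<in> B'" for a b
  proof (cases "u \<in> B")
    case True
    then have "R u v" "R v u"
      using uv simple_graphD(4)[OF G] B' by (auto simp: R_def)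
    then have "R\<^sup>*\<^sup>* a u" "R\<^sup>*\<^sup>* u b"
      using that B' True within_B by (blast intro: r_into_rtranclp)+
    then show ?thesis
      by (rule rtranclp_trans)
  next
    case False
    then show ?thesis
      using that B' within_B by blast
  qed
  moreover have "v \<in> V"
    using uv G by (auto dest: simple_graphD)
  ultimately show ?thesis
    using B B' unfolding connected_set_def B'_def[symmetric] R_def[abs_def] by auto
qed

lemma has_K4_minor_contract:
  assumes G: "simple_graph V E" and uv: "E u v"
    and K: "has_K4_minor (V - {v}) (contract E u v)"
  shows "has_K4_minor V E"
proof -
  obtain B :: "nat \<Rightarrow> _" where
        conn: "\<forall>i<4. connected_set (V - {v}) (contract E u v) (B i)"
    and disj: "\<forall>i<4. \<forall>j<4. i \<noteq> j \<longrightarrow> B i \<inter> B j = {}"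
    and adj: "\<forall>i<4. \<forall>j<4. i \<noteq> j \<longrightarrow> (\<exists>a\<in>B i. \<exists>b\<in>B j. contract E u v a b)"
    using K unfolding has_K4_minor_def by blast
  define B' where "B' i = (if u \<in> B i then insert v (B i) else B i)" for i
  have v_notin: "v \<notin> B i" if "i < 4" for i
    using conn that unfolding connected_set_def by blast
  have "\<forall>i<4. connected_set V E (B' i)"
    using conn connected_set_contract[OF G uv] unfolding B'_def by blast
  moreover have "\<forall>i<4. \<forall>j<4. i \<noteq> j \<longrightarrow> B' i \<inter> B' j = {}"
    using disj v_notin unfolding B'_def by auto
  moreover have "\<forall>i<4. \<forall>j<4. i \<noteq> j \<longrightarrow> (\<exists>a\<in>B' i. \<exists>b\<in>B' j. E a b)"
  proof (intro allI impI)
    fix i j :: nat assume "i < 4" "j < 4" "i \<noteq> j"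
    then obtain a b where "a \<in> B i" "b \<in> B j" "contract E u v a b"
      using adj by blast
    then show "\<exists>a\<in>B' i. \<exists>b\<in>B' j. E a b"
      unfolding B'_def contract_def by auto
  qed
  ultimately show ?thesis
    unfolding has_K4_minor_def by blast
qed

subsection \<open>Graphs of minimum degree 3 have a \<open>K\<^sub>4\<close> minor\<close>

locale minimal_counterexample =
  fixes V :: "'a set" and E :: "'a \<Rightarrow> 'a \<Rightarrow> bool"
  assumes simple: "simple_graph V E"
    and min_degree: "\<And>v. v \<in> V \<Longrightarrow> 3 \<le> degree E v"
    and no_K4_minor: "\<not> has_K4_minor V E"
    and minimal: "\<And>V' (E' :: 'a \<Rightarrow> 'a \<Rightarrow> bool).
      simple_graph V' E' \<Longrightarrow> V' \<noteq> {} \<Longrightarrow> \<forall>v\<in>V'. 3 \<le> degree E' v \<Longrightarrow>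
      card V' + card (edges E') < card V + card (edges E) \<Longrightarrow> has_K4_minor V' E'"
begin

lemma finite_nbrs: "finite {w. E v w}"
  using finite_neighbours[OF simple] .

lemma edge_sym: "E a b \<Longrightarrow> E b a"
  using simple_graphD(4)[OF simple] .

lemma no_loop: "\<not> E a a"
  using simple_graphD(5)[OF simple] .

lemma edge_vertices: "E a b \<Longrightarrow> a \<in> V" "E a b \<Longrightarrow> b \<in> V"
  using simple_graphD(2,3)[OF simple] by blast+

lemma other_neighbour:
  assumes "v \<in> V"
  shows "\<exists>w. E v w \<and> w \<noteq> a \<and> w \<noteq> b"
proof -
  have "card {a, b} \<le> 2"
    by (cases "a = b") simp_all
  then have "card {a, b} < degree E v"
    using min_degree[OF assms] by linarith
  then have "\<not> {w. E v w} \<subseteq> {a, b}"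
    using card_mono[of "{a, b}" "{w. E v w}"] by fastforce
  then show ?thesis
    by blast
qed

lemma no_contractible_edge:
  assumes uv: "E u v"
    and common: "\<And>w. E u w \<Longrightarrow> E v w \<Longrightarrow> 3 < degree E w"
    and merged: "3 \<le> card ({x. E u x} \<union> {x. E v x} - {u, v})"
  shows False
proof -
  have "u \<in> V" "v \<in> V" "u \<noteq> v"
    using uv edge_vertices no_loop by blast+
  then have "V - {v} \<noteq> {}" and "card (V - {v}) < card V"
    using card_Diff1_less[OF simple_graphD(1)[OF simple]] by blast+
  moreover have "\<forall>w\<in>V - {v}. 3 \<le> degree (contract E u v) w"
    using min_degree_contract[OF simple uv _ common merged] min_degree by blast
  ultimately have "has_K4_minor (V - {v}) (contract E u v)"
    using minimal[OF simple_graph_contract[OF simple uv]]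
      card_edges_contract_le[OF finite_edges[OF simple], of u v] by fastforce
  then show False
    using has_K4_minor_contract[OF simple uv] no_K4_minor by blast
qed

lemma no_heavy_edge:
  assumes "E p q"
  shows "degree E p = 3 \<or> degree E q = 3"
proof (rule ccontr)
  assume "\<not> ?thesis"
  then have heavy: "3 < degree E p" "3 < degree E q"
    using assms min_degree edge_vertices by fastforce+
  have "V \<noteq> {}"
    using assms edge_vertices by blast
  moreover have "\<forall>w\<in>V. 3 \<le> degree (delete_edge E p q) w"
    using min_degree_delete_edge[OF simple min_degree heavy] by blast
  ultimately have "has_K4_minor V (delete_edge E p q)"
    using minimal[OF simple_graph_delete_edge[OF simple]]
      card_edges_delete_edge_less[OF finite_edges[OF simple] assms] by fastforce
  then have "has_K4_minor V E"
    by (rule has_K4_minor_delete_edge)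
  with no_K4_minor show False ..
qed

lemma edge_in_triangle:
  assumes uv: "E u v"
  shows "\<exists>w. E u w \<and> E v w"
proof (rule ccontr)
  assume no_common: "\<not> ?thesis"
  obtain e where e: "E u e" "e \<noteq> v"
    using other_neighbour[OF edge_vertices(1)[OF uv]] by blast
  have "degree E v - 1 = card ({x. E v x} - {u})"
    using edge_sym[OF uv] finite_nbrs by simp
  also have "\<dots> < card (insert e ({x. E v x} - {u}))"
    using e no_common finite_nbrs by simp
  also have "\<dots> \<le> card ({x. E u x} \<union> {x. E v x} - {u, v})"
    using e no_common no_loop finite_nbrs by (intro card_mono) auto
  finally have "3 \<le> card ({x. E u x} \<union> {x. E v x} - {u, v})"
    using min_degree[of v] uv edge_vertices by fastforce
  then show False
    using no_contractible_edge[OF uv] no_common by blast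
qed

lemma path_nbhd_middle_neighbours:
  assumes zN: "{w. E z w} = {a, b, c}" and ab: "E a b" and bc: "E b c"
    and nac: "\<not> E a c" and "a \<noteq> c"
  shows "{w. E b w} = {z, a, c}"
proof -
  have z: "E z a" "E z b" "E z c"
    using zN by auto
  then have dist: "z \<noteq> a" "z \<noteq> b" "z \<noteq> c" "a \<noteq> b" "b \<noteq> c"
    using ab bc no_loop by metis+
  have "\<not> 3 < degree E b"
  proof
    assume heavy: "3 < degree E b"
    obtain d where d: "E a d" "d \<noteq> z" "d \<noteq> b"
      using other_neighbour[OF edge_vertices(2)[OF z(1)]] by blast
    have "3 \<le> card ({x. E z x} \<union> {x. E a x} - {z, a})"
      by (rule three_le_card[of _ b c d])
        (use finite_nbrs z d dist nac \<open>a \<noteq> c\<close> no_loop in auto)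
    moreover have "3 < degree E w" if "E z w" "E a w" for w
    proof -
      have "w \<in> {a, b, c}"
        using that(1) zN by blast
      then show ?thesis
        using that(2) nac no_loop[of a] heavy by blast
    qed
    ultimately show False
      using no_contractible_edge[OF z(1)] by blast
  qed
  then have "degree E b = 3"
    using min_degree[of b] z edge_vertices by fastforce
  moreover have "{z, a, c} \<subseteq> {w. E b w}"
    using z(2) ab bc edge_sym by blast
  moreover have "card {z, a, c} = 3"
    using dist \<open>a \<noteq> c\<close> by simp
  ultimately show ?thesis
    using card_subset_eq[OF finite_nbrs] by metis
qed

lemma path_nbhd_end_heavy:
  assumes zN: "{w. E z w} = {a, b, c}" and bN: "{w. E b w} = {z, a, c}" and nac: "\<not> E a c"
  shows "3 < degree E a"
proof (rule ccontr)
  assume "\<not> 3 < degree E a"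
  then have deg_a: "degree E a = 3"
    using min_degree[of a] zN edge_vertices by fastforce
  have za: "E a z" "E a b"
    using zN bN edge_sym by blast+
  have dist: "z \<noteq> b"
    using zN no_loop by blast
  obtain a' where a': "E a a'" "a' \<noteq> z" "a' \<noteq> b"
    using other_neighbour[OF edge_vertices(1)[OF za(1)]] by blast
  have "{z, b, a'} \<subseteq> {w. E a w}" "card {z, b, a'} = 3"
    using za a' dist by auto
  then have aN: "{w. E a w} = {z, b, a'}"
    using card_subset_eq[OF finite_nbrs] deg_a by metis
  have a'_not_adj: "\<not> E a' z" "\<not> E a' b"
    using zN bN a' nac no_loop edge_sym by blast+
  obtain d where d: "E a' d" "d \<noteq> a"
    using other_neighbour[OF edge_vertices(2)[OF a'(1)]] by blast
  have "3 \<le> card ({x. E a x} \<union> {x. E a' x} - {a, a'})"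
    by (rule three_le_card[of _ z b d])
      (use finite_nbrs za a' d dist a'_not_adj no_loop in auto)
  moreover have "\<not> (E a w \<and> E a' w)" for w
  proof
    assume "E a w \<and> E a' w"
    moreover from this have "w \<in> {z, b, a'}"
      using aN by blast
    ultimately show False
      using a'_not_adj no_loop by blast
  qed
  ultimately show False
    using no_contractible_edge[OF a'(1)] by blast
qed

text \<open>
  Delete \<open>b\<close> and contract \<open>z\<close> onto \<open>a\<close>: then \<open>a\<close> trades its neighbours \<open>z\<close> and \<open>b\<close> for \<open>c\<close>, and
  \<open>c\<close> loses only \<open>b\<close>, so heavy ends keep the minimum degree at 3.
\<close>

lemma diamond_reduction_min_degree:
  assumes zN: "{w. E z w} = {a, b, c}" and bN: "{w. E b w} = {z, a, c}"
    and nac: "\<not> E a c" and "a \<noteq> c" and heavy: "3 < degree E a" "3 < degree E c"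
  shows "\<forall>w\<in>V - {b} - {z}. 3 \<le> degree (contract (delete_vertex E b) a z) w"
proof -
  let ?G = "delete_vertex E b"
  have z: "E z a" "E z b" "E z c" and b: "E b z" "E b a" "E b c"
    using zN bN by auto
  have a: "E a z" "E a b"
    using z(1) b(2) edge_sym by blast+
  have dist: "z \<noteq> a" "z \<noteq> b" "z \<noteq> c" "a \<noteq> b" "b \<noteq> c"
    using z b no_loop by metis+
  have G: "simple_graph (V - {b}) ?G"
    using simple_graph_delete_vertex[OF simple] .
  have "3 \<le> degree ?G w" if "w \<in> V - {b}" "w \<noteq> a" "w \<noteq> z" for w
  proof -
    have "degree ?G w = card ({x. E w x} - {b})"
      using that neighbours_delete_vertex[of w b E] by simp
    moreover have "E w b \<longleftrightarrow> w = c"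
      using that bN b edge_sym by blast
    ultimately show ?thesis
      using that heavy min_degree finite_nbrs by (auto simp: card_Diff_singleton_if)
  qed
  moreover have "\<not> (?G a w \<and> ?G z w)" for w
  proof
    assume "?G a w \<and> ?G z w"
    moreover from this have "w \<in> {a, b, c}"
      using zN unfolding delete_vertex_def by blast
    ultimately show False
      using nac no_loop unfolding delete_vertex_def by blast
  qed
  moreover have "3 \<le> card ({x. ?G a x} \<union> {x. ?G z x} - {a, z})"
  proof -
    have sub: "insert c ({x. E a x} - {z, b}) \<subseteq> {x. ?G a x} \<union> {x. ?G z x} - {a, z}"
      using z dist \<open>a \<noteq> c\<close> no_loop unfolding delete_vertex_def by auto
    have fin: "finite ({x. ?G a x} \<union> {x. ?G z x} - {a, z})"
      using finite_neighbours[OF G] by blast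
    have "card (insert c ({x. E a x} - {z, b})) = degree E a - 1"
      using a nac heavy finite_nbrs dist(2) by (simp add: card_Diff_subset)
    then show ?thesis
      using card_mono[OF fin sub] heavy by linarith
  qed
  moreover have "?G a z"
    using a(1) dist unfolding delete_vertex_def by blast
  ultimately show ?thesis
    using min_degree_contract[OF G] by blast
qed

lemma no_heavy_ended_diamond:
  assumes zN: "{w. E z w} = {a, b, c}" and bN: "{w. E b w} = {z, a, c}"
    and nac: "\<not> E a c" and "a \<noteq> c" and heavy: "3 < degree E a" "3 < degree E c"
  shows False
proof -
  let ?G = "delete_vertex E b"
  have G: "simple_graph (V - {b}) ?G"
    using simple_graph_delete_vertex[OF simple] .
  have b: "E b z" "E b a"
    using bN by auto
  then have az: "?G a z" and "a \<in> V - {b} - {z}"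
    using zN edge_sym edge_vertices no_loop unfolding delete_vertex_def by blast+
  moreover have "card (V - {b} - {z}) < card V"
    using b(1) edge_vertices simple_graphD(1)[OF simple] by (intro psubset_card_mono) auto
  moreover have "card (edges (contract ?G a z)) \<le> card (edges E)"
    using card_edges_contract_le[OF finite_edges[OF G]]
      card_edges_delete_vertex_le[OF finite_edges[OF simple]] le_trans by blast
  ultimately have "has_K4_minor (V - {b} - {z}) (contract ?G a z)"
    using minimal[OF simple_graph_contract[OF G az]]
      diamond_reduction_min_degree[OF assms] by fastforce
  then show False
    using has_K4_minor_delete_vertex[OF has_K4_minor_contract[OF G az]] no_K4_minor by blast
qed

lemma no_path_nbhd:
  assumes zN: "{w. E z w} = {a, b, c}" and ab: "E a b" and bc: "E b c"
    and nac: "\<not> E a c" and "a \<noteq> c"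
  shows False
proof -
  have bN: "{w. E b w} = {z, a, c}"
    using path_nbhd_middle_neighbours[OF assms] .
  have "{w. E z w} = {c, b, a}" "{w. E b w} = {z, c, a}" "\<not> E c a"
    using zN bN nac edge_sym by blast+
  then have "3 < degree E c"
    by (rule path_nbhd_end_heavy)
  moreover have "3 < degree E a"
    using path_nbhd_end_heavy[OF zN bN nac] .
  ultimately show False
    using no_heavy_ended_diamond[OF zN bN nac \<open>a \<noteq> c\<close>] by blast
qed

lemma vertices_empty: "V = {}"
proof (rule ccontr)
  assume "V \<noteq> {}"
  then obtain v q where "E v q"
    using other_neighbour by blast
  then obtain z where z: "z \<in> V" "degree E z = 3"
    using no_heavy_edge edge_vertices by blast
  then obtain a b c where zN: "{w. E z w} = {a, b, c}" and dist: "a \<noteq> b" "a \<noteq> c" "b \<noteq> c"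
    by (auto simp: card_3_iff)
  have z_adj: "E z a" "E z b" "E z c"
    using zN by blast+
  have "\<exists>w\<in>{a, b, c}. E t w" if "t \<in> {a, b, c}" for t
    using edge_in_triangle[of z t] zN that edge_sym by blast
  then have "E a b \<or> E a c" "E b a \<or> E b c" "E c a \<or> E c b"
    using no_loop by blast+
  then consider "E a b" "E a c" "E b c" | "E a b" "E b c" "\<not> E a c"
    | "E a c" "E c b" "\<not> E a b" | "E b a" "E a c" "\<not> E b c"
    using edge_sym by blast
  then show False
  proof cases
    case 1
    then show False
      using has_K4_minor_clique[OF simple z_adj] no_K4_minor by blast
  next
    case 2
    then show False
      using no_path_nbhd[OF zN] dist by blast
  next
    case 3
    then show False
      using no_path_nbhd[of z a c b] zN dist by (simp add: insert_commute)
  next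
    case 4
    then show False
      using no_path_nbhd[of z b a c] zN dist by (simp add: insert_commute)
  qed
qed

end

theorem min_degree_3_has_K4_minor:
  assumes "simple_graph V E" "V \<noteq> {}" "\<forall>v\<in>V. 3 \<le> degree E v"
  shows "has_K4_minor V E"
  using assms
proof (induction "card V + card (edges E)" arbitrary: V E rule: less_induct)
  case less
  show ?case
  proof (rule ccontr)
    assume "\<not> has_K4_minor V E"
    with less interpret minimal_counterexample V E
      by unfold_locales blast+
    show False
      using vertices_empty less.prems(2) by blast
  qed
qed

subsection \<open>Colourings\<close>

lemma K4_minor_free_low_degree_vertex:
  assumes "simple_graph V E" "K4_minor_free V E" "V \<noteq> {}"
  obtains v where "v \<in> V" "degree E v \<le> 2"
  using min_degree_3_has_K4_minor[OF assms(1,3)] assms(2) that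
  unfolding K4_minor_free_def by force

lemma proper_3_coloring_extend:
  assumes G: "simple_graph V E" and c: "proper_3_coloring (V - {v}) (delete_vertex E v) c"
    and "degree E v \<le> 2"
  obtains k where "proper_3_coloring V E (c(v := k))"
proof -
  have fin: "finite (c ` {w. E v w})"
    using finite_neighbours[OF G] by blast
  have "card (c ` {w. E v w}) < card {0, 1, 2 :: nat}"
    using card_image_le[OF finite_neighbours[OF G], of c v] assms(3) by simp
  then have "\<not> {0, 1, 2} \<subseteq> c ` {w. E v w}"
    using card_mono[OF fin] by (meson leD)
  then obtain k :: nat where k: "k < 3" "k \<notin> c ` {w. E v w}"
    by force
  have "proper_3_coloring V E (c(v := k))"
    unfolding proper_3_coloring_def
  proof (intro conjI ballI allI impI)
    fix p assume "p \<in> V"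
    then show "(c(v := k)) p < 3"
      using c k(1) unfolding proper_3_coloring_def by auto
  next
    fix p q assume pq: "E p q"
    then have "E q p" "p \<noteq> q"
      using simple_graphD(4,5)[OF G] by blast+
    with pq c k(2) show "(c(v := k)) p \<noteq> (c(v := k)) q"
      unfolding proper_3_coloring_def delete_vertex_def by auto
  qed
  then show ?thesis
    by (rule that)
qed

lemma K4_minor_free_3_colorable:
  assumes "simple_graph V E" "K4_minor_free V E"
  shows "\<exists>c. proper_3_coloring V E c"
  using assms
proof (induction "card V" arbitrary: V E rule: less_induct)
  case less
  note G = simple_graphD[OF less.prems(1)]
  show ?case
  proof (cases "V = {}")
    case True
    then have "proper_3_coloring V E (\<lambda>_. 0)"
      using G(2) unfolding proper_3_coloring_def by blast
    then show ?thesis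
      by blast
  next
    case False
    then obtain v where v: "v \<in> V" "degree E v \<le> 2"
      using K4_minor_free_low_degree_vertex less.prems by blast
    have "K4_minor_free (V - {v}) (delete_vertex E v)"
      using less.prems(2) has_K4_minor_delete_vertex[of V v E]
      unfolding K4_minor_free_def by blast
    moreover have "card (V - {v}) < card V"
      using card_Diff1_less[OF G(1) v(1)] .
    ultimately obtain c where "proper_3_coloring (V - {v}) (delete_vertex E v) c"
      using less.hyps simple_graph_delete_vertex[OF less.prems(1)] by blast
    then show ?thesis
      using proper_3_coloring_extend[OF less.prems(1) _ v(2)] by metis
  qed
qed

lemma diamond_chain_hom_same_color:
  assumes h: "diamond_chain_hom V E n u v w" and c: "proper_3_coloring V E c" and "i \<le> n"
  shows "c (u i) = c (u 0)"
  using assms(3)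
proof (induction i)
  case (Suc i)
  let ?v = "v (Suc i)" and ?w = "w (Suc i)"
  have i: "i \<in> {0..n}" "Suc i \<in> {0..n}" "Suc i \<in> {1..n}"
    using Suc.prems by auto
  have "u i \<in> V" "u (Suc i) \<in> V" "?v \<in> V \<and> ?w \<in> V"
    and "E (u i) ?v \<and> E (u i) ?w \<and> E ?v ?w \<and> E ?v (u (Suc i)) \<and> E ?w (u (Suc i))"
    using h i unfolding diamond_chain_hom_def by (metis diff_Suc_1)+
  with c have "c (u i) < 3" "c ?v < 3" "c ?w < 3" "c (u (Suc i)) < 3"
    and "c (u i) \<noteq> c ?v" "c (u i) \<noteq> c ?w" "c ?v \<noteq> c ?w"
    and "c ?v \<noteq> c (u (Suc i))" "c ?w \<noteq> c (u (Suc i))"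
    unfolding proper_3_coloring_def by blast+
  then have "c (u (Suc i)) = c (u i)"
    by arith
  with Suc show ?case
    by simp
qed simp

lemma connected_by_diamonds_same_color:
  assumes "connected_by_diamonds V E X" "proper_3_coloring V E c" "p \<in> X" "q \<in> X"
  shows "c p = c q"
proof -
  obtain n u v w where h: "diamond_chain_hom V E n u v w" "X \<subseteq> u ` {0..n}"
    using assms(1) unfolding connected_by_diamonds_def by blast
  obtain i j where "i \<in> {0..n}" "j \<in> {0..n}" "p = u i" "q = u j"
    using h(2) assms(3,4) by blast
  then show ?thesis
    using diamond_chain_hom_same_color[OF h(1) assms(2), of i]
      diamond_chain_hom_same_color[OF h(1) assms(2), of j] by simp
qed

lemma feasible_triple:
  assumes "{p, q, r} \<subseteq> V" "p \<noteq> q" "p \<noteq> r" "q \<noteq> r"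
    and "\<not> connected_by_diamonds V E {p, q, r}" and "proper_3_coloring V E c"
    and "c p = c q \<or> c p = c r \<or> c q = c r"
  shows "feasible V E {p, q, r}"
proof -
  have "card {c p, c q, c r} \<le> 2"
    using assms(7) by (auto simp: card_insert_if)
  then show ?thesis
    using assms unfolding feasible_def by auto
qed

theorem mainTheorem9:
  fixes V :: "'a set" and E :: "'a \<Rightarrow> 'a \<Rightarrow> bool" and x x' y z :: 'a
  assumes "simple_graph V E" and "K4_minor_free V E"
    and "E x x'"
    and "y \<in> V" and "z \<in> V" and "y \<noteq> z"
    and "y \<notin> {x, x'}" and "z \<notin> {x, x'}"
  shows "feasible V E {x, y, z} \<or> feasible V E {x', y, z}"
proof -
  obtain c where c: "proper_3_coloring V E c"
    using K4_minor_free_3_colorable[OF assms(1,2)] by blast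
  have "x \<in> V" "x' \<in> V"
    using assms(3) simple_graphD(2,3)[OF assms(1)] by blast+
  then have colours: "c x < 3" "c x' < 3" "c y < 3" "c z < 3" "c x \<noteq> c x'"
    using c assms(3-5) unfolding proper_3_coloring_def by auto
  have monochromatic: "c p = c y \<and> c y = c z" if "connected_by_diamonds V E {p, y, z}" for p
    using connected_by_diamonds_same_color[OF that c] by blast
  have feasible: "feasible V E {p, y, z}"
    if "p \<in> {x, x'}" "\<not> connected_by_diamonds V E {p, y, z}" "c p = c y \<or> c p = c z \<or> c y = c z"
    for p
    using feasible_triple[OF _ _ _ _ that(2) c that(3)] that(1) \<open>x \<in> V\<close> \<open>x' \<in> V\<close> assms(4-8)
    by auto
  show ?thesis
  proof (cases "c y = c z")
    case True
    moreover have "\<not> connected_by_diamonds V E {x, y, z} \<or> \<not> connected_by_diamonds V E {x', y, z}"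
      using monochromatic[of x] monochromatic[of x'] colours(5) by auto
    ultimately show ?thesis
      using feasible[of x] feasible[of x'] by blast
  next
    case False
    then have "c x = c y \<or> c x = c z \<or> c x' = c y \<or> c x' = c z"
      using colours by arith
    with False show ?thesis
      using feasible[of x] feasible[of x'] monochromatic by blast
  qed
qed

end
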